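(* Let $\mathcal G=(V,E,r)$ be a non-trivial, connected graph. (1) $\mathsf D(\mathbf A(\mathcal G))=2|E|-|V|+1$. (2) An atom $a$ of $\mathbf A(\mathcal G)$ satisfies $\ell(a)=\mathsf D(\mathbf A(\mathcal G))$ if and only if $\operatorname{supp}(a)$ is a tree containing every vertex of $\mathcal G$ of degree at least $2$. In particular, every spanning tree of $\mathcal G$ yields (via its indicator) an atom of maximal sequence-length. If $\mathcal G$ has minimum vertex degree at least $2$, then the atoms of maximal sequence-length are in bijection with the spanning trees of $\mathcal G$.
   Context: A graph $\mathcal G=(V,E,r)$ consists of a finite vertex set $V$, a finite edge set $E$ disjoint from $V$, and a map $r$ assigning to each edge a two-element subset of $V$; multiple edges allowed, no loops. Non-trivial means $\mathcal G$ has more than one vertex. $\deg_{\mathcal G}(v)$ is the number of edges incident with $v$. An agglomeration on $\mathcal G$ is a function $a\colon V\cup E\to\mathbb N_0$ with $a(v)\ge a(e)$ whenever $v$ is incident with $e$; $\mathbf A(\mathcal G)$ is the monoid of agglomerations under pointwise addition. An atom is a nonzero element not a sum of two nonzero elements. $\operatorname{supp}(a)$ is the subgraph of vertices and edges where $a$ is positive. The sequence-length is $\ell(a)=\sum_{v\in V}\deg_{\mathcal G}(v)a(v)-\sum_{e\in E}a(e)$, and the Davenport constant is $\mathsf D(\mathbf A(\mathcal G))=\max\{\ell(a): a\text{ an atom of }\mathbf A(\mathcal G)\}$. *)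

theory Defs
  imports Main
begin

text \<open>A graph (V,E,r): finite vertex set V, finite edge set E (vertices and edges live in
different types, hence are disjoint), r assigns to each edge a two-element set of vertices.\<close>

definition graph :: "'v set \<Rightarrow> 'e set \<Rightarrow> ('e \<Rightarrow> 'v set) \<Rightarrow> bool" where
  "graph V E r \<longleftrightarrow> finite V \<and> finite E \<and> (\<forall>e\<in>E. r e \<subseteq> V \<and> card (r e) = 2)"

definition deg :: "'e set \<Rightarrow> ('e \<Rightarrow> 'v set) \<Rightarrow> 'v \<Rightarrow> nat" where
  "deg E r v = card {e\<in>E. v \<in> r e}"

definition adj_rel :: "'e set \<Rightarrow> ('e \<Rightarrow> 'v set) \<Rightarrow> ('v \<times> 'v) set" where
  "adj_rel E' r = {(v, w). \<exists>e\<in>E'. r e = {v, w}}"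

definition connected_graph :: "'v set \<Rightarrow> 'e set \<Rightarrow> ('e \<Rightarrow> 'v set) \<Rightarrow> bool" where
  "connected_graph V' E' r \<longleftrightarrow> (\<forall>v\<in>V'. \<forall>w\<in>V'. (v, w) \<in> (adj_rel E' r)\<^sup>*)"

text \<open>A cycle: distinct vertices vs!0,...,vs!(k-1) and distinct edges es!0,...,es!(k-1),
k \<ge> 2, with es!i joining vs!i and vs!((i+1) mod k). (k = 2: a pair of parallel edges.)\<close>
definition is_cycle :: "'e set \<Rightarrow> ('e \<Rightarrow> 'v set) \<Rightarrow> 'v list \<Rightarrow> 'e list \<Rightarrow> bool" where
  "is_cycle E' r vs es \<longleftrightarrow> length vs = length es \<and> length es \<ge> 2 \<and> distinct vs \<and> distinct es
     \<and> set es \<subseteq> E'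
     \<and> (\<forall>i<length es. r (es ! i) = {vs ! i, vs ! ((i + 1) mod length es)})"

definition is_tree :: "'v set \<Rightarrow> 'e set \<Rightarrow> ('e \<Rightarrow> 'v set) \<Rightarrow> bool" where
  "is_tree V' E' r \<longleftrightarrow> V' \<noteq> {} \<and> connected_graph V' E' r \<and> \<not> (\<exists>vs es. is_cycle E' r vs es)"

text \<open>Agglomerations: functions on V \<union> E (encoded as the sum type, zero outside V and E).\<close>
definition agg :: "'v set \<Rightarrow> 'e set \<Rightarrow> ('e \<Rightarrow> 'v set) \<Rightarrow> ('v + 'e \<Rightarrow> nat) \<Rightarrow> bool" where
  "agg V E r a \<longleftrightarrow>
     (\<forall>v. v \<notin> V \<longrightarrow> a (Inl v) = 0) \<and> (\<forall>e. e \<notin> E \<longrightarrow> a (Inr e) = 0)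
     \<and> (\<forall>e\<in>E. \<forall>v\<in>r e. a (Inr e) \<le> a (Inl v))"

definition is_atom :: "'v set \<Rightarrow> 'e set \<Rightarrow> ('e \<Rightarrow> 'v set) \<Rightarrow> ('v + 'e \<Rightarrow> nat) \<Rightarrow> bool" where
  "is_atom V E r a \<longleftrightarrow> agg V E r a \<and> a \<noteq> (\<lambda>_. 0)
     \<and> \<not> (\<exists>b c. agg V E r b \<and> agg V E r c \<and> b \<noteq> (\<lambda>_. 0) \<and> c \<noteq> (\<lambda>_. 0)
              \<and> a = (\<lambda>x. b x + c x))"

definition seq_len :: "'v set \<Rightarrow> 'e set \<Rightarrow> ('e \<Rightarrow> 'v set) \<Rightarrow> ('v + 'e \<Rightarrow> nat) \<Rightarrow> int" where
  "seq_len V E r a = (\<Sum>v\<in>V. int (deg E r v * a (Inl v))) - (\<Sum>e\<in>E. int (a (Inr e)))"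

definition davenport :: "'v set \<Rightarrow> 'e set \<Rightarrow> ('e \<Rightarrow> 'v set) \<Rightarrow> int" where
  "davenport V E r = Max (seq_len V E r ` {a. is_atom V E r a})"

definition supp_V :: "'v set \<Rightarrow> ('v + 'e \<Rightarrow> nat) \<Rightarrow> 'v set" where
  "supp_V V a = {v\<in>V. a (Inl v) > 0}"

definition supp_E :: "'e set \<Rightarrow> ('v + 'e \<Rightarrow> nat) \<Rightarrow> 'e set" where
  "supp_E E a = {e\<in>E. a (Inr e) > 0}"

definition tree_indicator :: "'v set \<Rightarrow> 'e set \<Rightarrow> ('v + 'e \<Rightarrow> nat)" where
  "tree_indicator V T = (\<lambda>x. case x of Inl v \<Rightarrow> (if v \<in> V then 1 else 0)
                                     | Inr e \<Rightarrow> (if e \<in> T then 1 else 0))"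

end

theory Submission
  imports Defs
begin

text \<open>Atoms are 0-1 valued (otherwise \<open>a = min a 1 + (a - 1)\<close> splits \<open>a\<close>), and a 0-1
  valued agglomeration is an atom if and only if its support is connected. For such an \<open>a\<close>
  with vertex support \<open>S\<close> and edge support \<open>F\<close>,
    \<open>seq_len a = (2|E| - |V| + 1) - (\<Sum>v\<in>V - S. deg v - 1) - (|F| + 1 - |S|)\<close>.
  In a connected graph with at least two vertices all degrees are positive, and a connected
  graph on \<open>S\<close> has at least \<open>|S| - 1\<close> edges, with equality exactly for trees. So both
  defects are nonnegative, and they vanish exactly when the support is a tree containing every
  vertex of degree at least 2. The indicator of a spanning tree attains the bound.\<close>

section \<open>Connectivity, cycles and trees\<close>

definition is_path :: "'e set \<Rightarrow> ('e \<Rightarrow> 'v set) \<Rightarrow> 'v list \<Rightarrow> 'e list \<Rightarrow> bool" where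
  "is_path F r xs es \<longleftrightarrow> length xs = Suc (length es) \<and> distinct xs \<and> set es \<subseteq> F
     \<and> (\<forall>i<length es. r (es ! i) = {xs ! i, xs ! Suc i})"

lemma sym_adj_rel: "sym (adj_rel F r)"
  unfolding adj_rel_def sym_def by (auto simp: insert_commute)

lemma rtrancl_adj_rel_sym: "(x, y) \<in> (adj_rel F r)\<^sup>* \<Longrightarrow> (y, x) \<in> (adj_rel F r)\<^sup>*"
  using sym_rtrancl[OF sym_adj_rel] by (rule symD)

lemma adj_rel_mono: "F \<subseteq> G \<Longrightarrow> adj_rel F r \<subseteq> adj_rel G r"
  unfolding adj_rel_def by auto

lemma connected_graphI_root:
  assumes "\<And>x. x \<in> S \<Longrightarrow> (x, v0) \<in> (adj_rel F r)\<^sup>*"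
  shows "connected_graph S F r"
  unfolding connected_graph_def using assms rtrancl_adj_rel_sym rtrancl_trans by metis

text \<open>Breadth-first search: \<open>d\<close> is the distance from the root and \<open>p x\<close> the last edge of a
  shortest path to \<open>x\<close>.\<close>

lemma connected_graph_parent_edges:
  assumes conn: "connected_graph S F r" and v0: "v0 \<in> S" and ends: "\<forall>e\<in>F. r e \<subseteq> S"
  shows "\<exists>p (d :: 'v \<Rightarrow> nat). inj_on p (S - {v0})
    \<and> (\<forall>x\<in>S - {v0}. p x \<in> F \<and> (\<exists>u\<in>S. r (p x) = {u, x} \<and> d u < d x))"
proof -
  let ?R = "adj_rel F r"
  define d where "d x = (LEAST n. (v0, x) \<in> ?R ^^ n)" for x
  have ex: "\<exists>e. e \<in> F \<and> (\<exists>u. r e = {u, x} \<and> d u < d x)" if x: "x \<in> S - {v0}" for x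
  proof -
    have "(v0, x) \<in> ?R\<^sup>*" using conn v0 x unfolding connected_graph_def by auto
    then obtain n where "(v0, x) \<in> ?R ^^ n" using rtrancl_power by blast
    then have dx: "(v0, x) \<in> ?R ^^ d x" unfolding d_def by (rule LeastI)
    then obtain m where m: "d x = Suc m" using x by (cases "d x") auto
    then obtain u where u: "(v0, u) \<in> ?R ^^ m" "(u, x) \<in> ?R" using dx by auto
    have "d u \<le> m" unfolding d_def using u(1) by (rule Least_le)
    then show ?thesis using u(2) m unfolding adj_rel_def by force
  qed
  define p where "p x = (SOME e. e \<in> F \<and> (\<exists>u. r e = {u, x} \<and> d u < d x))" for x
  have p: "p x \<in> F \<and> (\<exists>u. r (p x) = {u, x} \<and> d u < d x)" if "x \<in> S - {v0}" for x
    unfolding p_def by (rule someI_ex) (rule ex[OF that])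
  have "inj_on p (S - {v0})"
  proof (rule inj_onI)
    fix x y assume x: "x \<in> S - {v0}" and y: "y \<in> S - {v0}" and eq: "p x = p y"
    obtain u where u: "r (p x) = {u, x}" "d u < d x" using p x by blast
    obtain w where w: "r (p y) = {w, y}" "d w < d y" using p y by blast
    show "x = y"
    proof (rule ccontr)
      assume "x \<noteq> y"
      then have "x = w" "y = u" using u w eq by (auto simp: doubleton_eq_iff)
      then show False using u w by simp
    qed
  qed
  moreover have "\<forall>x\<in>S - {v0}. p x \<in> F \<and> (\<exists>u\<in>S. r (p x) = {u, x} \<and> d u < d x)"
    using p ends by blast
  ultimately show ?thesis by blast
qed

lemma connected_graph_spanning_subgraph:
  assumes "finite S" "S \<noteq> {}" "connected_graph S F r" "\<forall>e\<in>F. r e \<subseteq> S"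
  obtains T where "T \<subseteq> F" "connected_graph S T r" "card T + 1 = card S"
proof -
  obtain v0 where v0: "v0 \<in> S" using assms(2) by blast
  obtain p and d :: "_ \<Rightarrow> nat" where inj: "inj_on p (S - {v0})"
    and parent: "\<forall>x\<in>S - {v0}. p x \<in> F \<and> (\<exists>u\<in>S. r (p x) = {u, x} \<and> d u < d x)"
    using connected_graph_parent_edges[OF assms(3) v0 assms(4)] by blast
  let ?T = "p ` (S - {v0})"
  have "(x, v0) \<in> (adj_rel ?T r)\<^sup>*" if "x \<in> S" for x
    using that
  proof (induction x rule: measure_induct_rule[of d])
    case (less x)
    show ?case
    proof (cases "x = v0")
      case False
      then obtain u where u: "u \<in> S" "r (p x) = {u, x}" "d u < d x"
        using parent less.prems by blast
      have "p x \<in> ?T" using less.prems False by blast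
      moreover have "r (p x) = {x, u}" using u(2) by (simp add: insert_commute)
      ultimately have "(x, u) \<in> adj_rel ?T r" unfolding adj_rel_def by blast
      then show ?thesis using less.IH[OF u(3,1)] by (rule converse_rtrancl_into_rtrancl)
    qed simp
  qed
  then have "connected_graph S ?T r" by (rule connected_graphI_root)
  moreover have "?T \<subseteq> F" using parent by blast
  moreover have "card ?T + 1 = card S"
    using inj v0 assms(1) by (simp add: card_image) (metis card_gt_0_iff empty_iff Suc_pred)
  ultimately show thesis using that by blast
qed

lemma connected_graph_card_le:
  assumes "finite S" "finite F" "S \<noteq> {}" "connected_graph S F r" "\<forall>e\<in>F. r e \<subseteq> S"
  shows "card S \<le> card F + 1"
proof -
  obtain T where "T \<subseteq> F" "card T + 1 = card S"
    using connected_graph_spanning_subgraph[OF assms(1,3,4,5)] by blast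
  with card_mono[OF assms(2)] show ?thesis by (metis add_le_mono1)
qed

lemma rtrancl_adj_rel_Diff_edge:
  assumes "(a, b) \<in> (adj_rel (F - {f}) r)\<^sup>*" "r f = {a, b}"
  shows "(adj_rel F r)\<^sup>* = (adj_rel (F - {f}) r)\<^sup>*"
proof
  have "adj_rel F r \<subseteq> (adj_rel (F - {f}) r)\<^sup>*"
  proof (rule subrelI)
    fix x y assume "(x, y) \<in> adj_rel F r"
    then obtain e where e: "e \<in> F" "r e = {x, y}" unfolding adj_rel_def by blast
    show "(x, y) \<in> (adj_rel (F - {f}) r)\<^sup>*"
    proof (cases "e = f")
      case True
      then have "(x, y) = (a, b) \<or> (x, y) = (b, a)" using e assms(2) by (auto simp: doubleton_eq_iff)
      then show ?thesis using assms(1) rtrancl_adj_rel_sym[OF assms(1)] by blast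
    next
      case False
      then have "(x, y) \<in> adj_rel (F - {f}) r" using e unfolding adj_rel_def by blast
      then show ?thesis by (rule r_into_rtrancl)
    qed
  qed
  then show "(adj_rel F r)\<^sup>* \<subseteq> (adj_rel (F - {f}) r)\<^sup>*" by (rule rtrancl_subset_rtrancl)
  show "(adj_rel (F - {f}) r)\<^sup>* \<subseteq> (adj_rel F r)\<^sup>*" by (intro rtrancl_mono adj_rel_mono) blast
qed

lemma is_cycle_rtrancl_Diff_edge:
  assumes "is_cycle F r vs es"
  shows "(vs ! 1, vs ! 0) \<in> (adj_rel (F - {es ! 0}) r)\<^sup>*"
proof -
  let ?k = "length es" and ?R = "adj_rel (F - {es ! 0}) r"
  have k: "?k \<ge> 2" "distinct es" "set es \<subseteq> F"
    "\<forall>i<?k. r (es ! i) = {vs ! i, vs ! ((i + 1) mod ?k)}"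
    using assms unfolding is_cycle_def by auto
  have "j \<le> ?k \<longrightarrow> (vs ! 1, vs ! (j mod ?k)) \<in> ?R\<^sup>*" if "1 \<le> j" for j
    using that
  proof (induction j rule: dec_induct)
    case base
    then show ?case using k(1) by simp
  next
    case (step j)
    show ?case
    proof
      assume "Suc j \<le> ?k"
      then have "j < ?k" "0 < ?k" by auto
      then have "es ! j \<noteq> es ! 0" using k(2) step.hyps(1) by (simp add: nth_eq_iff_index_eq)
      then have "es ! j \<in> F - {es ! 0}" using k(3) \<open>j < ?k\<close> by auto
      moreover have "r (es ! j) = {vs ! (j mod ?k), vs ! (Suc j mod ?k)}"
        using k(4) \<open>Suc j \<le> ?k\<close> by simp
      ultimately have "(vs ! (j mod ?k), vs ! (Suc j mod ?k)) \<in> ?R" unfolding adj_rel_def by blast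
      then show "(vs ! 1, vs ! (Suc j mod ?k)) \<in> ?R\<^sup>*"
        using step.IH \<open>Suc j \<le> ?k\<close> by simp
    qed
  qed
  from this[of ?k] show ?thesis using k(1) by simp
qed

lemma connected_graph_cycle_card_le:
  assumes "finite S" "finite F" "S \<noteq> {}" "connected_graph S F r" "\<forall>e\<in>F. r e \<subseteq> S"
    and cycle: "is_cycle F r vs es"
  shows "card S \<le> card F"
proof -
  let ?f = "es ! 0"
  have k: "2 \<le> length es" "set es \<subseteq> F"
    "\<forall>i<length es. r (es ! i) = {vs ! i, vs ! ((i + 1) mod length es)}"
    using cycle unfolding is_cycle_def by auto
  have "es \<noteq> []" using k(1) by auto
  then have f: "?f \<in> F" "r ?f = {vs ! 1, vs ! 0}" using k by (auto simp: insert_commute)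
  have "connected_graph S (F - {?f}) r"
    using assms(4) rtrancl_adj_rel_Diff_edge[OF is_cycle_rtrancl_Diff_edge[OF cycle] f(2)]
    unfolding connected_graph_def by simp
  then have "card S \<le> card (F - {?f}) + 1"
    using assms by (intro connected_graph_card_le) auto
  moreover have "card F > 0" using f(1) assms(2) card_gt_0_iff by blast
  ultimately show ?thesis using f(1) by (simp add: card_Diff_singleton)
qed

lemma rtrancl_adj_rel_imp_path:
  assumes "(a, b) \<in> (adj_rel F r)\<^sup>*"
  shows "\<exists>xs es. is_path F r xs es \<and> hd xs = a \<and> last xs = b"
  using assms
proof (induction rule: rtrancl_induct)
  case base
  show ?case by (intro exI[of _ "[a]"] exI[of _ "[]"]) (simp add: is_path_def)
next
  case (step c d)
  obtain xs es where P: "length xs = Suc (length es)" "distinct xs" "set es \<subseteq> F"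
    "\<forall>i<length es. r (es ! i) = {xs ! i, xs ! Suc i}" "hd xs = a" "last xs = c"
    using step.IH unfolding is_path_def by blast
  obtain e where e: "e \<in> F" "r e = {c, d}" using step.hyps(2) unfolding adj_rel_def by auto
  have xs: "xs \<noteq> []" using P(1) by auto
  show ?case
  proof (cases "d \<in> set xs")
    case True
    then obtain j where j: "j < length xs" "xs ! j = d" by (auto simp: in_set_conv_nth)
    have "is_path F r (take (Suc j) xs) (take j es)"
      unfolding is_path_def
    proof (intro conjI)
      show "set (take j es) \<subseteq> F" using P(3) set_take_subset by (rule order_trans[rotated])
    qed (use P(1,2,4) j(1) in auto)
    moreover have "take (Suc j) xs = take j xs @ [d]" using j by (simp add: take_Suc_conv_app_nth)
    moreover have "hd (take (Suc j) xs) = a" using P(5) xs by simp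
    ultimately show ?thesis by (metis last_snoc)
  next
    case False
    have "is_path F r (xs @ [d]) (es @ [e])"
      unfolding is_path_def
    proof (intro conjI allI impI)
      fix i assume "i < length (es @ [e])"
      then consider "i < length es" | "i = length es" by fastforce
      then show "r ((es @ [e]) ! i) = {(xs @ [d]) ! i, (xs @ [d]) ! Suc i}"
      proof cases
        case 2
        have "xs ! length es = c" using P(1,6) xs by (simp add: last_conv_nth)
        then show ?thesis using 2 P(1) e(2) by (simp add: nth_append)
      qed (use P(1,4) in \<open>simp add: nth_append\<close>)
    qed (use P(1,2,3) False e(1) in auto)
    moreover have "hd (xs @ [d]) = a" using P(5) xs by simp
    ultimately show ?thesis by (intro exI[of _ "xs @ [d]"] exI[of _ "es @ [e]"]) simp
  qed
qed

lemma is_path_distinct_edges: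
  assumes "is_path F r xs es"
  shows "distinct es"
  unfolding distinct_conv_nth
proof (intro allI impI notI)
  fix i j assume ij: "i < length es" "j < length es" "i \<noteq> j" and eq: "es ! i = es ! j"
  have P: "length xs = Suc (length es)" "distinct xs" "\<forall>i<length es. r (es ! i) = {xs ! i, xs ! Suc i}"
    using assms unfolding is_path_def by auto
  have "xs ! i \<in> {xs ! j, xs ! Suc j}" "xs ! j \<in> {xs ! i, xs ! Suc i}"
    using P(3) ij eq by (metis insertI1)+
  then have "i = Suc j" "j = Suc i" using ij P(1,2) by (auto simp: nth_eq_iff_index_eq)
  then show False by simp
qed

lemma is_cycle_path_edge:
  assumes path: "is_path (F - {f}) r xs es" and f: "f \<in> F" "r f = {last xs, hd xs}"
    and ne: "hd xs \<noteq> last xs"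
  shows "is_cycle F r xs (es @ [f])"
proof -
  have P: "length xs = Suc (length es)" "distinct xs" "set es \<subseteq> F - {f}"
    "\<forall>i<length es. r (es ! i) = {xs ! i, xs ! Suc i}"
    using path unfolding is_path_def by auto
  have "xs \<noteq> []" using P(1) by auto
  then have ends: "last xs = xs ! length es" "hd xs = xs ! 0"
    using P(1) by (simp_all add: last_conv_nth hd_conv_nth)
  have "es \<noteq> []" using ne ends by auto
  show ?thesis
    unfolding is_cycle_def
  proof (intro conjI allI impI)
    fix i assume "i < length (es @ [f])"
    then consider "i < length es" | "i = length es" by fastforce
    then show "r ((es @ [f]) ! i) = {xs ! i, xs ! ((i + 1) mod length (es @ [f]))}"
    proof cases
      case 1
      then show ?thesis using P(4) by (simp add: nth_append)
    next
      case 2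
      then show ?thesis using f(2) ends by (simp add: nth_append insert_commute)
    qed
  qed (use P f is_path_distinct_edges[OF path] \<open>es \<noteq> []\<close> in \<open>auto simp: Suc_le_eq\<close>)
qed

lemma graph_subset_edges: "graph V E r \<Longrightarrow> T \<subseteq> E \<Longrightarrow> graph V T r"
  unfolding graph_def by (auto intro: finite_subset)

lemma connected_graph_acyclic_card_le:
  assumes g: "graph S F r" and "S \<noteq> {}" "connected_graph S F r"
    and acyclic: "\<nexists>vs es. is_cycle F r vs es"
  shows "card F + 1 \<le> card S"
proof (rule ccontr)
  assume "\<not> card F + 1 \<le> card S"
  have fin: "finite S" and ends: "\<forall>e\<in>F. r e \<subseteq> S"
    and two: "\<forall>e\<in>F. card (r e) = 2"
    using g unfolding graph_def by auto
  obtain T where T: "T \<subseteq> F" "connected_graph S T r" "card T + 1 = card S"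
    using connected_graph_spanning_subgraph[OF fin assms(2,3) ends] by blast
  then have "T \<noteq> F" using \<open>\<not> card F + 1 \<le> card S\<close> by auto
  then obtain f where f: "f \<in> F" "f \<notin> T" using T(1) by blast
  then obtain a b where ab: "r f = {a, b}" "a \<noteq> b" using two by (auto simp: card_2_iff)
  have "(adj_rel T r)\<^sup>* \<subseteq> (adj_rel (F - {f}) r)\<^sup>*"
    using T(1) f by (intro rtrancl_mono adj_rel_mono) blast
  moreover have "(b, a) \<in> (adj_rel T r)\<^sup>*"
    using T(2) ends f(1) ab(1) unfolding connected_graph_def by blast
  ultimately have "(b, a) \<in> (adj_rel (F - {f}) r)\<^sup>*" by (rule subsetD)
  then have "\<exists>xs es. is_path (F - {f}) r xs es \<and> hd xs = b \<and> last xs = a"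
    by (rule rtrancl_adj_rel_imp_path)
  then obtain xs es where path: "is_path (F - {f}) r xs es" "hd xs = b" "last xs = a" by blast
  have "is_cycle F r xs (es @ [f])"
    using is_cycle_path_edge[OF path(1) f(1)] ab path(2,3) by simp
  then show False using acyclic by blast
qed

lemma connected_graph_is_tree_iff_card:
  assumes g: "graph S F r" and "S \<noteq> {}" "connected_graph S F r"
  shows "is_tree S F r \<longleftrightarrow> card F + 1 = card S"
proof -
  have fin: "finite S" "finite F" and ends: "\<forall>e\<in>F. r e \<subseteq> S"
    using g unfolding graph_def by auto
  have "(\<nexists>vs es. is_cycle F r vs es) \<longleftrightarrow> card F + 1 = card S"
  proof
    assume acyclic: "\<nexists>vs es. is_cycle F r vs es"
    show "card F + 1 = card S"
      using connected_graph_acyclic_card_le[OF assms acyclic] connected_graph_card_le[OF fin assms(2,3) ends]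
      by linarith
  next
    assume "card F + 1 = card S"
    then show "\<nexists>vs es. is_cycle F r vs es"
      using connected_graph_cycle_card_le[OF fin assms(2,3) ends] by fastforce
  qed
  then show ?thesis using assms(2,3) unfolding is_tree_def by blast
qed

section \<open>Atoms of the agglomeration monoid\<close>

lemma is_atom_agg: "is_atom V E r a \<Longrightarrow> agg V E r a"
  unfolding is_atom_def by blast

lemma agg_mono_comp:
  assumes "agg V E r a" "mono f" "f 0 = 0"
  shows "agg V E r (f \<circ> a)"
  using assms unfolding agg_def mono_def by auto

lemma is_atom_le_1:
  assumes atom: "is_atom V E r a"
  shows "a x \<le> 1"
proof (rule ccontr)
  assume "\<not> a x \<le> 1"
  define b where "b = (\<lambda>n. min n (1::nat)) \<circ> a"
  define c where "c = (\<lambda>n. n - (1::nat)) \<circ> a"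
  have "agg V E r b" "agg V E r c"
    unfolding b_def c_def using is_atom_agg[OF atom] by (auto intro!: agg_mono_comp simp: mono_def)
  moreover have "b x \<noteq> 0" "c x \<noteq> 0" using \<open>\<not> a x \<le> 1\<close> unfolding b_def c_def by auto
  then have "b \<noteq> (\<lambda>_. 0)" "c \<noteq> (\<lambda>_. 0)" by auto
  moreover have "a = (\<lambda>y. b y + c y)" unfolding b_def c_def by (auto simp: fun_eq_iff)
  ultimately show False using atom unfolding is_atom_def by blast
qed

lemma graph_supp:
  assumes g: "graph V E r" and "agg V E r a"
  shows "graph (supp_V V a) (supp_E E a) r"
proof -
  have "r e \<subseteq> supp_V V a" if "e \<in> supp_E E a" for e
  proof
    fix v assume "v \<in> r e"
    moreover have "e \<in> E" "a (Inr e) > 0" using that unfolding supp_E_def by auto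
    ultimately show "v \<in> supp_V V a"
      using g assms(2) unfolding graph_def agg_def supp_V_def by fastforce
  qed
  then show ?thesis using g unfolding graph_def supp_V_def supp_E_def by auto
qed

lemma agg_supp_V_nonempty:
  assumes g: "graph V E r" and ag: "agg V E r a" and nz: "a \<noteq> (\<lambda>_. 0)"
  shows "supp_V V a \<noteq> {}"
proof -
  obtain x where x: "a x \<noteq> 0" using nz by auto
  show ?thesis
  proof (cases x)
    case (Inl v)
    then show ?thesis using ag x unfolding agg_def supp_V_def by auto
  next
    case (Inr e)
    then have e: "e \<in> E" using ag x unfolding agg_def by auto
    then obtain v where v: "v \<in> r e" using g unfolding graph_def by (force simp: card_2_iff)
    then have "v \<in> V" "a (Inr e) \<le> a (Inl v)" using g ag e unfolding graph_def agg_def by auto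
    then show ?thesis using x Inr unfolding supp_V_def by auto
  qed
qed

definition restrict_agg :: "('e \<Rightarrow> 'v set) \<Rightarrow> 'v set \<Rightarrow> ('v + 'e \<Rightarrow> nat) \<Rightarrow> 'v + 'e \<Rightarrow> nat" where
  "restrict_agg r C a = (\<lambda>y. case y of Inl v \<Rightarrow> if v \<in> C then a y else 0
                                   | Inr e \<Rightarrow> if r e \<inter> C \<noteq> {} then a y else 0)"

lemma restrict_agg_le: "restrict_agg r C a y \<le> a y"
  unfolding restrict_agg_def by (cases y) auto

lemma agg_restrict_agg:
  assumes ag: "agg V E r a"
    and closed: "\<And>e. e \<in> supp_E E a \<Longrightarrow> r e \<inter> C \<noteq> {} \<Longrightarrow> r e \<subseteq> C"
  shows "agg V E r (restrict_agg r C a)" and "agg V E r (\<lambda>y. a y - restrict_agg r C a y)"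
proof -
  have le: "a (Inr e) \<le> a (Inl v)" if "e \<in> E" "v \<in> r e" for e v
    using ag that unfolding agg_def by blast
  have "v \<in> C" if "e \<in> E" "v \<in> r e" "r e \<inter> C \<noteq> {}" "a (Inr e) > 0" for e v
    using closed[of e] that unfolding supp_E_def by auto
  then show "agg V E r (restrict_agg r C a)"
    using ag le unfolding agg_def restrict_agg_def by (fastforce simp: not_less)
  show "agg V E r (\<lambda>y. a y - restrict_agg r C a y)"
    using ag le unfolding agg_def restrict_agg_def by auto
qed

text \<open>An atom cannot be split along a component of its support.\<close>

lemma is_atom_connected_supp:
  assumes g: "graph V E r" and atom: "is_atom V E r a"
  shows "connected_graph (supp_V V a) (supp_E E a) r"
  unfolding connected_graph_def
proof (intro ballI, rule ccontr)
  fix v w assume v: "v \<in> supp_V V a" and w: "w \<in> supp_V V a"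
    and not_conn: "(v, w) \<notin> (adj_rel (supp_E E a) r)\<^sup>*"
  let ?R = "adj_rel (supp_E E a) r"
  define C where "C = {x. (v, x) \<in> ?R\<^sup>*}"
  have closed: "r e \<subseteq> C" if e: "e \<in> supp_E E a" "r e \<inter> C \<noteq> {}" for e
  proof
    fix x assume x: "x \<in> r e"
    obtain u where u: "u \<in> r e" "u \<in> C" using e(2) by blast
    have "card (r e) = 2" using g e(1) unfolding graph_def supp_E_def by auto
    then have "r e = {u, x} \<or> u = x" using u(1) x by (auto simp: card_2_iff)
    then have "(u, x) \<in> ?R\<^sup>*" using e(1) unfolding adj_rel_def by auto
    with u(2) have "(v, x) \<in> ?R\<^sup>*" unfolding C_def by (simp add: rtrancl_trans)
    then show "x \<in> C" unfolding C_def by simp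
  qed
  define b where "b = restrict_agg r C a"
  define c where "c = (\<lambda>y. a y - b y)"
  have "agg V E r b" "agg V E r c"
    unfolding b_def c_def using agg_restrict_agg[OF is_atom_agg[OF atom]] closed by blast+
  moreover have "b (Inl v) > 0" "c (Inl w) > 0"
    using v w not_conn unfolding b_def c_def C_def restrict_agg_def supp_V_def by auto
  then have "b \<noteq> (\<lambda>_. 0)" "c \<noteq> (\<lambda>_. 0)" by auto
  moreover have "a = (\<lambda>y. b y + c y)"
    unfolding c_def b_def by (simp add: fun_eq_iff restrict_agg_le le_add_diff_inverse)
  ultimately show False using atom unfolding is_atom_def by blast
qed

text \<open>If \<open>a = b + c\<close> with 0-1 valued \<open>a\<close>, positivity of \<open>b\<close> propagates along the edges
  supported by \<open>a\<close>, since these carry value 1 and hence vanish in \<open>c\<close>.\<close>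

lemma agg_01_connected_is_atom:
  assumes g: "graph V E r" and ag: "agg V E r a" and le1: "\<And>x. a x \<le> 1"
    and ne: "supp_V V a \<noteq> {}" and conn: "connected_graph (supp_V V a) (supp_E E a) r"
  shows "is_atom V E r a"
proof -
  have False if b: "agg V E r b" "b \<noteq> (\<lambda>_. 0)" and c: "agg V E r c" "c \<noteq> (\<lambda>_. 0)"
     and abc: "a = (\<lambda>x. b x + c x)" for b c
  proof -
    have a: "a x = b x + c x" for x using abc by simp
    obtain u where u: "u \<in> supp_V V b" using agg_supp_V_nonempty[OF g b] by blast
    obtain w where w: "w \<in> supp_V V c" using agg_supp_V_nonempty[OF g c] by blast
    have "u \<in> supp_V V a" "w \<in> supp_V V a" using u w a unfolding supp_V_def by auto
    then have "(u, w) \<in> (adj_rel (supp_E E a) r)\<^sup>*" using conn unfolding connected_graph_def by blast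
    then have "b (Inl w) > 0"
    proof (induction rule: rtrancl_induct)
      case base
      then show ?case using u unfolding supp_V_def by simp
    next
      case (step y z)
      obtain e where e: "e \<in> E" "a (Inr e) > 0" "r e = {y, z}"
        using step.hyps(2) unfolding adj_rel_def supp_E_def by auto
      have "c (Inl y) = 0" using step.IH a[of "Inl y"] le1[of "Inl y"] by linarith
      then have "c (Inr e) = 0" using c(1) e unfolding agg_def by fastforce
      then have "b (Inr e) > 0" using e(2) a[of "Inr e"] by simp
      then show ?case using b(1) e unfolding agg_def by fastforce
    qed
    then show False using w a[of "Inl w"] le1[of "Inl w"] unfolding supp_V_def by auto
  qed
  moreover have "a \<noteq> (\<lambda>_. 0)" using ne unfolding supp_V_def by auto
  ultimately show ?thesis using ag unfolding is_atom_def by blast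
qed

lemma agg_01_eqI:
  assumes "agg V E r a" "agg V E r b" "\<And>x. a x \<le> 1" "\<And>x. b x \<le> 1"
    and "supp_V V a = supp_V V b" "supp_E E a = supp_E E b"
  shows "a = b"
proof
  fix x
  have "a x > 0 \<longleftrightarrow> b x > 0"
  proof (cases x)
    case (Inl v)
    have "a (Inl v) > 0 \<longleftrightarrow> b (Inl v) > 0"
    proof (cases "v \<in> V")
      case True
      then show ?thesis using assms(5) unfolding supp_V_def set_eq_iff by blast
    qed (use assms(1,2) in \<open>simp add: agg_def\<close>)
    then show ?thesis using Inl by simp
  next
    case (Inr e)
    have "a (Inr e) > 0 \<longleftrightarrow> b (Inr e) > 0"
    proof (cases "e \<in> E")
      case True
      then show ?thesis using assms(6) unfolding supp_E_def set_eq_iff by blast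
    qed (use assms(1,2) in \<open>simp add: agg_def\<close>)
    then show ?thesis using Inr by simp
  qed
  then show "a x = b x" using assms(3,4)[of x] by linarith
qed

lemma sum_deg_eq_twice_card:
  assumes g: "graph V E r"
  shows "(\<Sum>v\<in>V. deg E r v) = 2 * card E"
proof -
  have fin: "finite V" "finite E" using g unfolding graph_def by auto
  have "(\<Sum>v\<in>V. deg E r v) = (\<Sum>v\<in>V. \<Sum>e\<in>E. if v \<in> r e then 1 else 0)"
    unfolding deg_def using fin(2) by (simp add: sum.If_cases Collect_conj_eq Int_commute)
  also have "\<dots> = (\<Sum>e\<in>E. \<Sum>v\<in>V. if v \<in> r e then 1 else 0)" by (rule sum.swap)
  also have "\<dots> = (\<Sum>e\<in>E. card (r e))"
  proof (rule sum.cong)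
    fix e assume "e \<in> E"
    then have "r e \<subseteq> V" using g unfolding graph_def by auto
    then show "(\<Sum>v\<in>V. if v \<in> r e then 1 else 0) = card (r e)"
      using fin(1) by (simp add: sum.If_cases Int_absorb1)
  qed simp
  also have "\<dots> = 2 * card E" using g unfolding graph_def by simp
  finally show ?thesis .
qed

lemma seq_len_01:
  assumes g: "graph V E r" and ag: "agg V E r a" and le1: "\<And>x. a x \<le> 1"
  shows "seq_len V E r a
    = 2 * int (card E) - int (\<Sum>v\<in>V - supp_V V a. deg E r v) - int (card (supp_E E a))"
proof -
  let ?S = "supp_V V a"
  have fin: "finite V" "finite E" using g unfolding graph_def by auto
  have a01: "a x = (if 0 < a x then 1 else 0)" for x using le1[of x] by auto
  have "deg E r v * a (Inl v) = (if 0 < a (Inl v) then deg E r v else 0)" for v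
    by (subst a01) simp
  then have "(\<Sum>v\<in>V. deg E r v * a (Inl v)) = (\<Sum>v\<in>V. if 0 < a (Inl v) then deg E r v else 0)"
    by simp
  also have "\<dots> = (\<Sum>v\<in>?S. deg E r v)"
    unfolding supp_V_def using fin by (simp add: sum.inter_filter)
  finally have vertices: "(\<Sum>v\<in>V. deg E r v * a (Inl v)) = (\<Sum>v\<in>?S. deg E r v)" .
  have "(\<Sum>e\<in>E. a (Inr e)) = (\<Sum>e\<in>E. if 0 < a (Inr e) then 1 else 0)"
    by (intro sum.cong refl) (rule a01)
  also have "\<dots> = card (supp_E E a)"
    unfolding supp_E_def using fin by (simp add: sum.If_cases Collect_conj_eq Int_commute)
  finally have edges: "(\<Sum>e\<in>E. a (Inr e)) = card (supp_E E a)" .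
  have "(\<Sum>v\<in>V. deg E r v) = (\<Sum>v\<in>V - ?S. deg E r v) + (\<Sum>v\<in>?S. deg E r v)"
    using fin by (intro sum.subset_diff) (auto simp: supp_V_def)
  moreover have "seq_len V E r a = int (\<Sum>v\<in>V. deg E r v * a (Inl v)) - int (\<Sum>e\<in>E. a (Inr e))"
    unfolding seq_len_def by simp
  ultimately show ?thesis using vertices edges sum_deg_eq_twice_card[OF g] by linarith
qed

lemma agg_tree_indicator: "graph V E r \<Longrightarrow> T \<subseteq> E \<Longrightarrow> agg V E r (tree_indicator V T)"
  unfolding graph_def agg_def tree_indicator_def by auto

lemma tree_indicator_le_1: "tree_indicator V T x \<le> 1"
  unfolding tree_indicator_def by (auto split: sum.split)

lemma supp_V_tree_indicator: "supp_V V (tree_indicator V T) = V"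
  unfolding supp_V_def tree_indicator_def by auto

lemma supp_E_tree_indicator: "T \<subseteq> E \<Longrightarrow> supp_E E (tree_indicator V T) = T"
  unfolding supp_E_def tree_indicator_def by auto

section \<open>Connected graphs with at least two vertices\<close>

locale nontrivial_connected_graph =
  fixes V :: "'v set" and E :: "'e set" and r :: "'e \<Rightarrow> 'v set"
  assumes graph: "graph V E r" and card_V_gt_1: "card V > 1" and connected: "connected_graph V E r"
begin

lemma finite_V: "finite V" and finite_E: "finite E"
  using graph unfolding graph_def by auto

lemma V_nonempty: "V \<noteq> {}"
  using card_V_gt_1 by auto

lemma deg_ge_1:
  assumes v: "v \<in> V"
  shows "1 \<le> deg E r v"
proof -
  have "V \<noteq> {v}" using card_V_gt_1 by auto
  then obtain w where w: "w \<in> V" "w \<noteq> v" using v by blast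
  have "(v, w) \<in> (adj_rel E r)\<^sup>*" using connected v w(1) unfolding connected_graph_def by blast
  then obtain y where "(v, y) \<in> adj_rel E r" using w(2) by (metis converse_rtranclE)
  then obtain e where "e \<in> E" "v \<in> r e" unfolding adj_rel_def by auto
  then have "{e\<in>E. v \<in> r e} \<noteq> {}" by blast
  then show ?thesis unfolding deg_def using finite_E by (simp add: Suc_le_eq card_gt_0_iff)
qed

lemma seq_len_01_defects:
  assumes ag: "agg V E r a" and le1: "\<And>x. a x \<le> 1"
  shows "seq_len V E r a = 2 * int (card E) - int (card V) + 1
    - int (\<Sum>v\<in>V - supp_V V a. deg E r v - 1)
    - (int (card (supp_E E a)) + 1 - int (card (supp_V V a)))"
proof -
  let ?S = "supp_V V a"
  have "?S \<subseteq> V" unfolding supp_V_def by auto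
  then have card_diff: "card (V - ?S) + card ?S = card V"
    using finite_V by (metis card_Diff_subset card_mono finite_subset le_add_diff_inverse2)
  have "(\<Sum>v\<in>V - ?S. deg E r v) = (\<Sum>v\<in>V - ?S. (deg E r v - 1) + 1)"
  proof (rule sum.cong)
    fix v assume "v \<in> V - ?S"
    then show "deg E r v = deg E r v - 1 + 1" using deg_ge_1[of v] by simp
  qed simp
  also have "\<dots> = (\<Sum>v\<in>V - ?S. deg E r v - 1) + card (V - ?S)"
    unfolding sum.distrib by simp
  finally show ?thesis using seq_len_01[OF graph ag le1] card_diff by linarith
qed

lemma atom_seq_len:
  assumes atom: "is_atom V E r a"
  shows "seq_len V E r a \<le> 2 * int (card E) - int (card V) + 1"
    and "seq_len V E r a = 2 * int (card E) - int (card V) + 1 \<longleftrightarrow>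
      is_tree (supp_V V a) (supp_E E a) r \<and> {v\<in>V. 2 \<le> deg E r v} \<subseteq> supp_V V a"
proof -
  let ?S = "supp_V V a" and ?F = "supp_E E a"
  have ag: "agg V E r a" and le1: "\<And>x. a x \<le> 1"
    using is_atom_agg[OF atom] is_atom_le_1[OF atom] by auto
  have g: "graph ?S ?F r" using graph_supp[OF graph ag] .
  have ne: "?S \<noteq> {}" using agg_supp_V_nonempty[OF graph ag] atom unfolding is_atom_def by blast
  have conn: "connected_graph ?S ?F r" using is_atom_connected_supp[OF graph atom] .
  have "(\<Sum>v\<in>V - ?S. deg E r v - 1) = 0 \<longleftrightarrow> (\<forall>v\<in>V - ?S. deg E r v \<le> 1)"
    using finite_V by simp
  also have "\<dots> \<longleftrightarrow> (\<forall>v\<in>V - ?S. \<not> 2 \<le> deg E r v)"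
    by (rule ball_cong[OF refl]) linarith
  also have "\<dots> \<longleftrightarrow> {v\<in>V. 2 \<le> deg E r v} \<subseteq> ?S" by blast
  finally have leaves: "(\<Sum>v\<in>V - ?S. deg E r v - 1) = 0 \<longleftrightarrow> {v\<in>V. 2 \<le> deg E r v} \<subseteq> ?S" .
  have "card ?S \<le> card ?F + 1"
    using g ne conn connected_graph_card_le unfolding graph_def by blast
  moreover have "is_tree ?S ?F r \<longleftrightarrow> card ?F + 1 = card ?S"
    using connected_graph_is_tree_iff_card[OF g ne conn] .
  ultimately show "seq_len V E r a \<le> 2 * int (card E) - int (card V) + 1"
    and "seq_len V E r a = 2 * int (card E) - int (card V) + 1 \<longleftrightarrow>
      is_tree ?S ?F r \<and> {v\<in>V. 2 \<le> deg E r v} \<subseteq> ?S"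
    using seq_len_01_defects[OF ag le1] leaves by linarith+
qed

lemma spanning_tree_indicator:
  assumes T: "T \<subseteq> E" "is_tree V T r"
  shows "is_atom V E r (tree_indicator V T)"
    and "seq_len V E r (tree_indicator V T) = 2 * int (card E) - int (card V) + 1"
proof -
  show atom: "is_atom V E r (tree_indicator V T)"
    using T agg_01_connected_is_atom[OF graph agg_tree_indicator[OF graph T(1)] tree_indicator_le_1]
    by (simp add: supp_V_tree_indicator supp_E_tree_indicator is_tree_def)
  show "seq_len V E r (tree_indicator V T) = 2 * int (card E) - int (card V) + 1"
    using atom_seq_len(2)[OF atom] T by (simp add: supp_V_tree_indicator supp_E_tree_indicator)
qed

lemma exists_spanning_tree: "\<exists>T\<subseteq>E. is_tree V T r"
proof -
  obtain T where T: "T \<subseteq> E" "connected_graph V T r" "card T + 1 = card V"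
    using connected_graph_spanning_subgraph[OF finite_V V_nonempty connected] graph
    unfolding graph_def by blast
  then have "is_tree V T r"
    using connected_graph_is_tree_iff_card[OF graph_subset_edges[OF graph T(1)] V_nonempty] by blast
  then show ?thesis using T(1) by blast
qed

lemma davenport_eq: "davenport V E r = 2 * int (card E) - int (card V) + 1"
proof -
  let ?L = "seq_len V E r ` {a. is_atom V E r a}"
  have "- int (card E) \<le> seq_len V E r a" if "is_atom V E r a" for a
  proof -
    have "(\<Sum>e\<in>E. int (a (Inr e))) \<le> (\<Sum>e\<in>E. 1)"
      using is_atom_le_1[OF that] by (intro sum_mono) auto
    moreover have "0 \<le> (\<Sum>v\<in>V. int (deg E r v * a (Inl v)))" by (intro sum_nonneg) auto
    ultimately show ?thesis unfolding seq_len_def by simp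
  qed
  then have "?L \<subseteq> {- int (card E) .. 2 * int (card E) - int (card V) + 1}"
    using atom_seq_len(1) by auto
  then have "finite ?L" by (rule finite_subset) simp
  moreover obtain T where "T \<subseteq> E" "is_tree V T r" using exists_spanning_tree by blast
  then have "2 * int (card E) - int (card V) + 1 \<in> ?L"
    using spanning_tree_indicator by (metis (mono_tags, lifting) image_eqI mem_Collect_eq)
  ultimately show ?thesis unfolding davenport_def using atom_seq_len(1) by (intro Max_eqI) auto
qed

lemma bij_betw_supp_E_max_atoms:
  assumes min_deg: "\<forall>v\<in>V. 2 \<le> deg E r v"
  shows "bij_betw (supp_E E) {a. is_atom V E r a \<and> seq_len V E r a = davenport V E r}
    {T. T \<subseteq> E \<and> is_tree V T r}"
proof -
  let ?M = "{a. is_atom V E r a \<and> seq_len V E r a = davenport V E r}"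
  have max_atom: "supp_V V a = V \<and> is_tree V (supp_E E a) r" if "a \<in> ?M" for a
  proof -
    have tree: "is_tree (supp_V V a) (supp_E E a) r" and "{v\<in>V. 2 \<le> deg E r v} \<subseteq> supp_V V a"
      using that atom_seq_len(2) davenport_eq by auto
    moreover have "supp_V V a \<subseteq> V" unfolding supp_V_def by auto
    ultimately have "supp_V V a = V" using min_deg by auto
    then show ?thesis using tree by simp
  qed
  have "inj_on (supp_E E) ?M"
  proof (rule inj_onI)
    fix a b assume a: "a \<in> ?M" and b: "b \<in> ?M" and eq: "supp_E E a = supp_E E b"
    then have "is_atom V E r a" "is_atom V E r b" by auto
    then show "a = b"
      using agg_01_eqI is_atom_agg is_atom_le_1 max_atom[OF a] max_atom[OF b] eq by metis
  qed
  moreover have "supp_E E ` ?M = {T. T \<subseteq> E \<and> is_tree V T r}"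
  proof
    show "supp_E E ` ?M \<subseteq> {T. T \<subseteq> E \<and> is_tree V T r}"
      using max_atom unfolding supp_E_def by auto
    show "{T. T \<subseteq> E \<and> is_tree V T r} \<subseteq> supp_E E ` ?M"
    proof
      fix T assume "T \<in> {T. T \<subseteq> E \<and> is_tree V T r}"
      then have T: "T \<subseteq> E" "is_tree V T r" by auto
      then have "tree_indicator V T \<in> ?M" using spanning_tree_indicator davenport_eq by simp
      then show "T \<in> supp_E E ` ?M" using supp_E_tree_indicator[OF T(1)] by (metis image_eqI)
    qed
  qed
  ultimately show ?thesis unfolding bij_betw_def by blast
qed

end

theorem proposition4p11:
  fixes V :: "'v set" and E :: "'e set" and r :: "'e \<Rightarrow> 'v set"
  assumes "graph V E r" and "card V > 1" and "connected_graph V E r"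
  shows "davenport V E r = 2 * int (card E) - int (card V) + 1
    \<and> (\<forall>a. is_atom V E r a \<longrightarrow>
           (seq_len V E r a = davenport V E r \<longleftrightarrow>
             is_tree (supp_V V a) (supp_E E a) r \<and> {v\<in>V. deg E r v \<ge> 2} \<subseteq> supp_V V a))
    \<and> (\<forall>T. T \<subseteq> E \<and> is_tree V T r \<longrightarrow>
           is_atom V E r (tree_indicator V T) \<and>
           seq_len V E r (tree_indicator V T) = davenport V E r)
    \<and> ((\<forall>v\<in>V. deg E r v \<ge> 2) \<longrightarrow>
           bij_betw (supp_E E) {a. is_atom V E r a \<and> seq_len V E r a = davenport V E r}
                    {T. T \<subseteq> E \<and> is_tree V T r})"
proof -
  interpret nontrivial_connected_graph V E r
    using assms by unfold_locales
  show ?thesis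
    using davenport_eq atom_seq_len(2) spanning_tree_indicator bij_betw_supp_E_max_atoms by simp
qed

end
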